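(* Let $G=(V,E)$ be a finite simple graph and $v\in V$. Let $G-v$ denote the graph obtained from $G$ by deleting $v$ and all edges incident to $v$. Then $$\gamma_{coe}(G)-\deg(v)-1\leq \gamma_{coe}(G-v)\leq \gamma_{coe}(G)+\deg(v)-1.$$
   Context: All graphs are finite and simple. For a graph $G=(V,E)$ and $v\in V$, $N_G(v)=\{u\in V: uv\in E\}$ and $\deg(v)=|N_G(v)|$. A set $D\subseteq V$ is a dominating set if every vertex of $V\setminus D$ is adjacent to at least one vertex of $D$. A dominating set $D$ is a co-even dominating set if $\deg(v)$ is even for every $v\in V\setminus D$ (degrees taken in the graph under consideration). The co-even domination number $\gamma_{coe}(G)$ is the minimum cardinality of a co-even dominating set of $G$. *)

theory Defs
  imports Main
begin

definition simple_graph :: "'a set \<Rightarrow> ('a \<Rightarrow> 'a \<Rightarrow> bool) \<Rightarrow> bool" where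
  "simple_graph V E \<longleftrightarrow> finite V \<and> (\<forall>x y. E x y \<longrightarrow> E y x)
     \<and> (\<forall>x. \<not> E x x) \<and> (\<forall>x y. E x y \<longrightarrow> x \<in> V \<and> y \<in> V)"

definition nbhd :: "'a set \<Rightarrow> ('a \<Rightarrow> 'a \<Rightarrow> bool) \<Rightarrow> 'a \<Rightarrow> 'a set" where
  "nbhd V E v = {u \<in> V. E u v}"

definition deg :: "'a set \<Rightarrow> ('a \<Rightarrow> 'a \<Rightarrow> bool) \<Rightarrow> 'a \<Rightarrow> nat" where
  "deg V E v = card (nbhd V E v)"

definition dominating :: "'a set \<Rightarrow> ('a \<Rightarrow> 'a \<Rightarrow> bool) \<Rightarrow> 'a set \<Rightarrow> bool" where
  "dominating V E D \<longleftrightarrow> D \<subseteq> V \<and> (\<forall>x \<in> V - D. \<exists>d \<in> D. E x d)"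

definition coeven_dominating :: "'a set \<Rightarrow> ('a \<Rightarrow> 'a \<Rightarrow> bool) \<Rightarrow> 'a set \<Rightarrow> bool" where
  "coeven_dominating V E D \<longleftrightarrow> dominating V E D \<and> (\<forall>x \<in> V - D. even (deg V E x))"

definition gamma_coe :: "'a set \<Rightarrow> ('a \<Rightarrow> 'a \<Rightarrow> bool) \<Rightarrow> nat" where
  "gamma_coe V E = Min {card D | D. coeven_dominating V E D}"

definition del_vertex_V :: "'a set \<Rightarrow> 'a \<Rightarrow> 'a set" where
  "del_vertex_V V v = V - {v}"

definition del_vertex_E :: "('a \<Rightarrow> 'a \<Rightarrow> bool) \<Rightarrow> 'a \<Rightarrow> 'a \<Rightarrow> 'a \<Rightarrow> bool" where
  "del_vertex_E E v = (\<lambda>x y. E x y \<and> x \<noteq> v \<and> y \<noteq> v)"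

end

theory Submission
  imports Defs
begin

text \<open>Every co-even dominating set D' of G - v extends to the co-even dominating set
  D' \<union> N[v] of G: the vertices left outside are not adjacent to v, so their degrees are
  the same in both graphs. Conversely, a co-even dominating set D of G yields the
  co-even dominating set (D - {v}) \<union> N(v) of G - v; as v is dominated, either v \<in> D or
  D already meets N(v), so this set has at most |D| + deg v - 1 elements.\<close>

lemma coeven_dominating_subset: "coeven_dominating V E D \<Longrightarrow> D \<subseteq> V"
  by (simp add: coeven_dominating_def dominating_def)

lemma coeven_dominating_carrier: "coeven_dominating V E V"
  by (simp add: coeven_dominating_def dominating_def)

lemma finite_coeven_dominating_cards:
  assumes "finite V"
  shows "finite {card D | D. coeven_dominating V E D}"
proof -
  have "{card D | D. coeven_dominating V E D} \<subseteq> card ` Pow V"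
    by (auto dest: coeven_dominating_subset)
  then show ?thesis
    using assms finite_subset by blast
qed

lemma gamma_coe_le:
  assumes "finite V" "coeven_dominating V E D"
  shows "gamma_coe V E \<le> card D"
  unfolding gamma_coe_def using assms finite_coeven_dominating_cards[OF assms(1)]
  by (intro Min_le) auto

lemma gamma_coe_attained:
  assumes "finite V"
  obtains D where "coeven_dominating V E D" "card D = gamma_coe V E"
proof -
  have "gamma_coe V E \<in> {card D | D. coeven_dominating V E D}"
    unfolding gamma_coe_def
    using finite_coeven_dominating_cards[OF assms] coeven_dominating_carrier[of V E]
    by (intro Min_in) auto
  then obtain D where "coeven_dominating V E D" "gamma_coe V E = card D"
    by blast
  then show ?thesis
    using that by simp
qed

lemma nbhd_del_vertex:
  assumes "x \<noteq> v"
  shows "nbhd (del_vertex_V V v) (del_vertex_E E v) x = nbhd V E x - {v}"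
  using assms by (auto simp: nbhd_def del_vertex_V_def del_vertex_E_def)

lemma deg_del_vertex_nonadjacent:
  assumes "x \<noteq> v" "\<not> E v x"
  shows "deg (del_vertex_V V v) (del_vertex_E E v) x = deg V E x"
proof -
  have "v \<notin> nbhd V E x"
    using assms(2) by (simp add: nbhd_def)
  then show ?thesis
    using nbhd_del_vertex[OF assms(1)] by (simp add: deg_def)
qed

lemma coeven_dominating_insert_del_vertex:
  assumes G: "simple_graph V E" and "v \<in> V"
    and D': "coeven_dominating (del_vertex_V V v) (del_vertex_E E v) D'"
  shows "coeven_dominating V E (D' \<union> insert v (nbhd V E v))"
  unfolding coeven_dominating_def dominating_def
proof (intro conjI ballI)
  show "D' \<union> insert v (nbhd V E v) \<subseteq> V"
    using coeven_dominating_subset[OF D'] \<open>v \<in> V\<close>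
    by (auto simp: del_vertex_V_def nbhd_def)
next
  fix x
  assume "x \<in> V - (D' \<union> insert v (nbhd V E v))"
  then have x: "x \<in> del_vertex_V V v - D'" "x \<noteq> v" "\<not> E v x"
    using G by (auto simp: del_vertex_V_def nbhd_def simple_graph_def)
  then obtain d where "d \<in> D'" "del_vertex_E E v x d"
    using D' unfolding coeven_dominating_def dominating_def by blast
  then show "\<exists>d \<in> D' \<union> insert v (nbhd V E v). E x d"
    by (auto simp: del_vertex_E_def)
  have "even (deg (del_vertex_V V v) (del_vertex_E E v) x)"
    using D' x(1) by (simp add: coeven_dominating_def)
  then show "even (deg V E x)"
    using deg_del_vertex_nonadjacent[of x v E V] x(2,3) by simp
qed

lemma coeven_dominating_replace_by_nbhd:
  assumes G: "simple_graph V E" and D: "coeven_dominating V E D"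
  shows "coeven_dominating (del_vertex_V V v) (del_vertex_E E v) (D - {v} \<union> nbhd V E v)"
  unfolding coeven_dominating_def dominating_def
proof (intro conjI ballI)
  show "D - {v} \<union> nbhd V E v \<subseteq> del_vertex_V V v"
    using coeven_dominating_subset[OF D] G
    by (auto simp: del_vertex_V_def nbhd_def simple_graph_def)
next
  fix x
  assume "x \<in> del_vertex_V V v - (D - {v} \<union> nbhd V E v)"
  then have x: "x \<in> V - D" "x \<noteq> v" "\<not> E v x"
    using G by (auto simp: del_vertex_V_def nbhd_def simple_graph_def)
  then obtain d where "d \<in> D" "E x d"
    using D unfolding coeven_dominating_def dominating_def by blast
  moreover have "d \<noteq> v"
    using \<open>E x d\<close> x(3) G by (auto simp: simple_graph_def)
  ultimately show "\<exists>d \<in> D - {v} \<union> nbhd V E v. del_vertex_E E v x d"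
    using x(2) by (auto simp: del_vertex_E_def)
  show "even (deg (del_vertex_V V v) (del_vertex_E E v) x)"
    using D x deg_del_vertex_nonadjacent[of x v E V] by (simp add: coeven_dominating_def)
qed

lemma dominating_meets_closed_nbhd:
  assumes G: "simple_graph V E" and "dominating V E D" "v \<in> V"
  shows "v \<in> D \<or> D \<inter> nbhd V E v \<noteq> {}"
proof (cases "v \<in> D")
  case False
  then obtain d where "d \<in> D" "E v d"
    using assms(2,3) unfolding dominating_def by blast
  then have "d \<in> D \<inter> nbhd V E v"
    using G by (auto simp: nbhd_def simple_graph_def)
  then show ?thesis
    by blast
qed simp

lemma card_Diff_singleton_Un_le:
  assumes "finite A" "finite B" "v \<in> A \<or> A \<inter> B \<noteq> {}"
  shows "card (A - {v} \<union> B) + 1 \<le> card A + card B"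
proof (cases "v \<in> A")
  case True
  have "card (A - {v} \<union> B) \<le> card (A - {v}) + card B"
    by (rule card_Un_le)
  moreover have "card (A - {v}) + 1 = card A"
    using card_Suc_Diff1[OF assms(1) True] by simp
  ultimately show ?thesis
    by linarith
next
  case False
  then have "card (A \<inter> B) \<ge> 1"
    using assms by (simp add: Suc_le_eq card_gt_0_iff)
  moreover have "card (A \<union> B) + card (A \<inter> B) = card A + card B"
    using assms(1,2) by (rule card_Un_Int[symmetric])
  ultimately show ?thesis
    using False by simp
qed

lemma gamma_coe_le_del_vertex:
  assumes G: "simple_graph V E" and "v \<in> V"
  shows "gamma_coe V E \<le> gamma_coe (del_vertex_V V v) (del_vertex_E E v) + deg V E v + 1"
proof -
  have fin: "finite V"
    using G by (simp add: simple_graph_def)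
  then obtain D' where D': "coeven_dominating (del_vertex_V V v) (del_vertex_E E v) D'"
      and card_D': "card D' = gamma_coe (del_vertex_V V v) (del_vertex_E E v)"
    using gamma_coe_attained[of "del_vertex_V V v"] by (auto simp: del_vertex_V_def)
  have "gamma_coe V E \<le> card (D' \<union> insert v (nbhd V E v))"
    using gamma_coe_le[OF fin coeven_dominating_insert_del_vertex[OF G \<open>v \<in> V\<close> D']] .
  also have "\<dots> \<le> card D' + card (insert v (nbhd V E v))"
    by (rule card_Un_le)
  also have "card (insert v (nbhd V E v)) \<le> deg V E v + 1"
    by (simp add: deg_def card_insert_le_m1)
  finally show ?thesis
    using card_D' by simp
qed

lemma gamma_coe_del_vertex_le:
  assumes G: "simple_graph V E" and "v \<in> V"
  shows "gamma_coe (del_vertex_V V v) (del_vertex_E E v) + 1 \<le> gamma_coe V E + deg V E v"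
proof -
  have fin: "finite V"
    using G by (simp add: simple_graph_def)
  then obtain D where D: "coeven_dominating V E D" and card_D: "card D = gamma_coe V E"
    using gamma_coe_attained by blast
  have "gamma_coe (del_vertex_V V v) (del_vertex_E E v) \<le> card (D - {v} \<union> nbhd V E v)"
    using gamma_coe_le[OF _ coeven_dominating_replace_by_nbhd[OF G D]] fin
    by (simp add: del_vertex_V_def)
  moreover have "card (D - {v} \<union> nbhd V E v) + 1 \<le> card D + card (nbhd V E v)"
  proof (rule card_Diff_singleton_Un_le)
    show "finite D"
      using coeven_dominating_subset[OF D] fin finite_subset by blast
    show "finite (nbhd V E v)"
      using fin by (simp add: nbhd_def)
    show "v \<in> D \<or> D \<inter> nbhd V E v \<noteq> {}"
      using D dominating_meets_closed_nbhd[OF G _ \<open>v \<in> V\<close>]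
      by (simp add: coeven_dominating_def)
  qed
  ultimately show ?thesis
    using card_D by (simp add: deg_def)
qed

theorem mainTheorem2:
  fixes V :: "'a set" and E :: "'a \<Rightarrow> 'a \<Rightarrow> bool" and v :: 'a
  assumes "simple_graph V E" and "v \<in> V"
  shows "int (gamma_coe V E) - int (deg V E v) - 1
           \<le> int (gamma_coe (del_vertex_V V v) (del_vertex_E E v))
       \<and> int (gamma_coe (del_vertex_V V v) (del_vertex_E E v))
           \<le> int (gamma_coe V E) + int (deg V E v) - 1"
  using gamma_coe_le_del_vertex[OF assms] gamma_coe_del_vertex_le[OF assms] by linarith

end
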